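(* Let $a\in[-1,1/3]$, $a\neq0$. For $\theta\in(2\pi/3,\pi)$ define \[ \zeta(\theta)=\frac{(2a-1)\cos\theta+\sqrt{(1-4a)\cos^2\theta+a}}{1-4a\cos^2\theta},\qquad z(\theta)=\frac{a\zeta(\theta)}{(2\cos\theta+\zeta(\theta))(1+2\zeta(\theta)\cos\theta)}, \] where at the (possible) point $\theta=\cos^{-1}(-1/(2\sqrt a))$ (occurring when $1/4<a\le1/3$) $z$ is extended by continuity (this singularity is removable). Then $z(\theta)$ is increasing on $(2\pi/3,\pi)$. *)

theory Defs
  imports Complex_Main
begin

definition zeta :: "real \<Rightarrow> real \<Rightarrow> real" where
  "zeta a \<theta> = ((2*a - 1) * cos \<theta> + sqrt ((1 - 4*a) * (cos \<theta>)^2 + a)) / (1 - 4*a*(cos \<theta>)^2)"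

definition z_raw :: "real \<Rightarrow> real \<Rightarrow> real" where
  "z_raw a \<theta> = a * zeta a \<theta> / ((2 * cos \<theta> + zeta a \<theta>) * (1 + 2 * zeta a \<theta> * cos \<theta>))"

definition z_fun :: "real \<Rightarrow> real \<Rightarrow> real" where
  "z_fun a \<theta> = (if 1 - 4*a*(cos \<theta>)^2 \<noteq> 0 then z_raw a \<theta> else Lim (at \<theta>) (z_raw a))"

end

theory Submission
  imports Defs
begin

text \<open>
  Write \<open>c = cos \<theta>\<close>, which decreases from \<open>-1/2\<close> to \<open>-1\<close> on \<open>(2\<pi>/3, \<pi>)\<close>. The quantity
  \<open>u = 2c + 1/\<zeta>\<close> equals \<open>(\<surd>D + c)/a\<close> with \<open>D = (1 - 4a)c\<^sup>2 + a > 0\<close>; it is negative, satisfies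
  \<open>a u\<^sup>2 = 2cu - 4c\<^sup>2 + 1\<close>, and in terms of it \<open>z = (u - 2c)/u\<^sup>3\<close>. This expression is smooth in \<open>c\<close>
  (so it also provides the continuous extension across \<open>1 - 4a c\<^sup>2 = 0\<close>), and the quadratic
  relation reduces its derivative to \<open>-2((u - 3c)\<^sup>2 + 1 - c\<^sup>2)/(\<surd>D u\<^sup>4) < 0\<close>.
  Hence \<open>z\<close> decreases in \<open>c\<close> and increases in \<open>\<theta>\<close>.
\<close>

definition disc :: "real \<Rightarrow> real \<Rightarrow> real" where
  "disc a c = (1 - 4*a) * c^2 + a"

definition u_param :: "real \<Rightarrow> real \<Rightarrow> real" where
  "u_param a c = (sqrt (disc a c) + c) / a"

definition z_param :: "real \<Rightarrow> real \<Rightarrow> real" where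
  "z_param a c = (u_param a c - 2*c) / (u_param a c)^3"

lemma u_param_quadratic:
  assumes "a \<noteq> 0" and "disc a c \<ge> 0"
  shows "a * (u_param a c)^2 = 2*c * u_param a c - 4*c^2 + 1"
proof -
  have "(sqrt (disc a c))^2 = (1 - 4*a) * c^2 + a"
    using assms(2) by (simp add: disc_def)
  moreover have "a * u_param a c = sqrt (disc a c) + c"
    using assms(1) by (simp add: u_param_def)
  ultimately show ?thesis
    using assms(1) by algebra
qed

lemma cos_bounds_on_upper_third:
  assumes "t \<in> {2*pi/3<..<pi}"
  shows "-1 < cos t" and "cos t < -1/2"
proof -
  have t: "2*pi/3 < t" "t < pi" using assms by auto
  show "-1 < cos t" using cos_monotone_0_pi[of t pi] t by simp
  show "cos t < -1/2" using cos_monotone_0_pi[of "2*pi/3" t] t by (simp add: cos_120)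
qed

locale z_parameter_range =
  fixes a c :: real
  assumes a_le: "a \<le> 1/3" and a_nonzero: "a \<noteq> 0"
    and c_gt: "-1 < c" and c_lt: "c < -1/2"
begin

abbreviation s where "s \<equiv> sqrt (disc a c)"
abbreviation u where "u \<equiv> u_param a c"

lemma c_sq_bounds: "1/4 < c^2" "c^2 < 1"
proof -
  have "(1/2)^2 < (-c)^2" using c_lt by (intro power_strict_mono) auto
  then show "1/4 < c^2" by (simp add: power2_eq_square)
  have "(-c)^2 < 1^2" using c_gt c_lt by (intro power_strict_mono) auto
  then show "c^2 < 1" by simp
qed

lemma disc_pos: "disc a c > 0"
proof (cases "a \<ge> 0")
  case True
  have "a * (4*c^2 - 1) \<le> (1/3) * (4*c^2 - 1)"
    using a_le c_sq_bounds by (intro mult_right_mono) auto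
  then show ?thesis using c_sq_bounds by (simp add: disc_def algebra_simps)
next
  case False
  then have "a * (1 - 4*c^2) \<ge> 0" using c_sq_bounds by (intro mult_nonpos_nonpos) auto
  then show ?thesis using c_sq_bounds by (simp add: disc_def algebra_simps)
qed

lemma s_pos: "s > 0"
  using disc_pos by simp

lemma s_sq: "s^2 = (1 - 4*a) * c^2 + a"
  using disc_pos by (simp add: disc_def)

lemma a_mult_u: "a * u = s + c"
  using a_nonzero by (simp add: u_param_def)

lemma u_quadratic: "a * u^2 = 2*c*u - 4*c^2 + 1"
  using u_param_quadratic a_nonzero disc_pos by simp

text \<open>\<open>s\<^sup>2 - c\<^sup>2 = a (1 - 4c\<^sup>2)\<close>, so \<open>s + c\<close> has the sign of \<open>a\<close>.\<close>
lemma u_neg: "u < 0"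
proof -
  have diff: "s^2 - (-c)^2 = a * (1 - 4*c^2)" using s_sq by (simp add: algebra_simps)
  show ?thesis
  proof (cases "a > 0")
    case True
    have "a * (1 - 4*c^2) < 0" using True c_sq_bounds by (intro mult_pos_neg) auto
    then have "s < -c" using diff power_less_imp_less_base[of s 2 "-c"] c_lt by auto
    then have "a * u < 0" using a_mult_u by simp
    then show ?thesis using True by (simp add: mult_less_0_iff)
  next
    case False
    then have "a < 0" using a_nonzero by simp
    moreover have "a * (1 - 4*c^2) > 0" using \<open>a < 0\<close> c_sq_bounds by (intro mult_neg_neg) auto
    then have "-c < s" using diff power_less_imp_less_base[of "-c" 2 s] s_pos by auto
    then have "a * u > 0" using a_mult_u by simp
    ultimately show ?thesis by (simp add: zero_less_mult_iff)
  qed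
qed

text \<open>
  At \<open>1 - 4a c\<^sup>2 = 0\<close> both sides vanish: the numerator \<open>u - 2c\<close> of \<open>z_param\<close> is zero there, and
  \<open>zeta a t\<close> (a division by zero) is \<open>0\<close>, so \<open>z_raw a t = 0\<close> as well.
\<close>
lemma z_raw_eq_z_param:
  assumes "cos t = c"
  shows "z_raw a t = z_param a c"
proof -
  define q where "q = 1 - 4*a*c^2"
  define w where "w = u - 2*c"
  have a_mult_w: "a * w = s + (1 - 2*a) * c"
    using a_mult_u by (simp add: w_def algebra_simps)
  have conj_prod: "((2*a - 1)*c + s) * (s + (1 - 2*a)*c) = a * q"
    using s_sq by (simp add: q_def algebra_simps power2_eq_square)
  have zeta_eq: "zeta a t = ((2*a - 1)*c + s) / q"
    using assms by (simp add: zeta_def disc_def q_def)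
  have "(2*a - 1) * c > 0" using a_le c_lt by (intro mult_neg_neg) auto
  then have num_pos: "(2*a - 1)*c + s > 0" using s_pos by linarith
  show ?thesis
  proof (cases "q = 0")
    case True
    then have "s + (1 - 2*a)*c = 0" using conj_prod num_pos by simp
    then have "w = 0" using a_mult_w a_nonzero by simp
    then show ?thesis using zeta_eq True by (simp add: z_raw_def z_param_def w_def)
  next
    case False
    have "w \<noteq> 0" using conj_prod a_mult_w False a_nonzero by auto
    have zeta_w: "zeta a t = 1 / w"
    proof -
      have "zeta a t * (a * w) = a" using zeta_eq conj_prod a_mult_w False by simp
      then show ?thesis using \<open>w \<noteq> 0\<close> a_nonzero by (simp add: field_simps)
    qed
    have quad_w: "a * u^2 = 2*c*w + 1"
      using u_quadratic by (simp add: w_def algebra_simps power2_eq_square)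
    have "(2 * cos t + zeta a t) * (1 + 2 * zeta a t * cos t) = (2*c*w + 1) * u / w^2"
      using \<open>w \<noteq> 0\<close> by (simp add: zeta_w assms w_def field_simps power2_eq_square)
    also have "\<dots> = a * u^3 / w^2"
      by (simp add: quad_w[symmetric] power2_eq_square power3_eq_cube)
    finally have "z_raw a t = (a / w) / (a * u^3 / w^2)"
      by (simp add: z_raw_def zeta_w)
    also have "\<dots> = w / u^3"
      using \<open>w \<noteq> 0\<close> a_nonzero u_neg by (simp add: field_simps power2_eq_square power3_eq_cube)
    finally show ?thesis by (simp add: z_param_def w_def)
  qed
qed

lemma u_param_deriv: "DERIV (u_param a) c :> (u - 4*c) / s"
proof -
  have "DERIV (\<lambda>x. (sqrt ((1 - 4*a) * x^2 + a) + x) / a) c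
          :> (inverse s / 2 * ((1 - 4*a) * (2*c)) + 1) / a"
    using disc_pos a_nonzero by (auto intro!: derivative_eq_intros simp: disc_def)
  moreover have "(inverse s / 2 * ((1 - 4*a) * (2*c)) + 1) / a = (u - 4*c) / s"
    using s_pos a_nonzero a_mult_u by (simp add: field_simps del: real_sqrt_mult_self) algebra
  ultimately show ?thesis by (simp add: u_param_def [abs_def] disc_def)
qed

text \<open>Eliminating \<open>u s = a u\<^sup>2 - c u\<close> with the quadratic relation is what makes the sign visible.\<close>
lemma z_param_deriv:
  "DERIV (z_param a) c :> -2 * ((u - 3*c)^2 + 1 - c^2) / (s * u^4)"
proof -
  let ?u' = "(u - 4*c) / s"
  have "DERIV (z_param a) c :> ((?u' - 2) * u^3 - 3 * u^2 * ?u' * (u - 2*c)) / (u^3)^2"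
    unfolding z_param_def [abs_def] using u_neg
    by (auto intro!: derivative_eq_intros u_param_deriv simp: power2_eq_square)
  moreover have "u * s = 2*c*u - 4*c^2 + 1 - c*u"
    using a_mult_u u_quadratic by algebra
  then have "((?u' - 2) * u^3 - 3 * u^2 * ?u' * (u - 2*c)) / (u^3)^2
               = -2 * ((u - 3*c)^2 + 1 - c^2) / (s * u^4)"
    using s_pos u_neg by (simp add: field_simps del: real_sqrt_mult_self) algebra
  ultimately show ?thesis by simp
qed

lemma z_param_deriv_neg: "-2 * ((u - 3*c)^2 + 1 - c^2) / (s * u^4) < 0"
proof -
  have "(u - 3*c)^2 + 1 - c^2 > 0" using c_sq_bounds zero_le_power2[of "u - 3*c"] by linarith
  moreover have "s * u^4 > 0" using s_pos u_neg by simp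
  ultimately show ?thesis by (simp add: divide_neg_pos)
qed

end

lemma z_param_strict_antimono:
  assumes "a \<le> 1/3" "a \<noteq> 0" and "-1 < c" "c < c'" "c' < -1/2"
  shows "z_param a c' < z_param a c"
proof (rule DERIV_neg_imp_decreasing[OF \<open>c < c'\<close>])
  fix x assume "c \<le> x" "x \<le> c'"
  then interpret z_parameter_range a x using assms by unfold_locales auto
  show "\<exists>y. DERIV (z_param a) x :> y \<and> y < 0"
    using z_param_deriv z_param_deriv_neg by blast
qed

lemma z_fun_eq_z_param:
  assumes "a \<le> 1/3" "a \<noteq> 0" and t: "t \<in> {2*pi/3<..<pi}"
  shows "z_fun a t = z_param a (cos t)"
proof -
  have range: "z_parameter_range a (cos x)" if "x \<in> {2*pi/3<..<pi}" for x
    using assms cos_bounds_on_upper_third[OF that] by unfold_locales auto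
  have "isCont (\<lambda>x. z_param a (cos x)) t"
    using isCont_o2[OF isCont_cos DERIV_isCont[OF z_parameter_range.z_param_deriv[OF range[OF t]]]] .
  then have "((\<lambda>x. z_param a (cos x)) \<longlongrightarrow> z_param a (cos t)) (at t)"
    by (simp add: isCont_def)
  moreover have "\<forall>\<^sub>F x in at t. x \<in> {2*pi/3<..<pi}"
    using t by (intro eventually_at_in_open') auto
  then have "\<forall>\<^sub>F x in at t. z_param a (cos x) = z_raw a x"
    by eventually_elim (simp add: z_parameter_range.z_raw_eq_z_param[OF range])
  ultimately have "(z_raw a \<longlongrightarrow> z_param a (cos t)) (at t)"
    by (rule Lim_transform_eventually)
  then have "Lim (at t) (z_raw a) = z_param a (cos t)"
    by (intro tendsto_Lim) auto
  then show ?thesis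
    using z_parameter_range.z_raw_eq_z_param[OF range[OF t] refl] by (simp add: z_fun_def)
qed

theorem lemma2p8:
  fixes a :: real
  assumes "-1 \<le> a" and "a \<le> 1/3" and "a \<noteq> 0"
  shows "strict_mono_on {2*pi/3<..<pi} (z_fun a)"
proof (rule strict_mono_onI)
  fix x y assume x: "x \<in> {2*pi/3<..<pi}" and y: "y \<in> {2*pi/3<..<pi}" and "x < y"
  have "cos y < cos x"
    using x y \<open>x < y\<close> by (intro cos_monotone_0_pi) auto
  then have "z_param a (cos x) < z_param a (cos y)"
    using assms cos_bounds_on_upper_third[OF x] cos_bounds_on_upper_third[OF y]
    by (intro z_param_strict_antimono) auto
  then show "z_fun a x < z_fun a y"
    using z_fun_eq_z_param[OF assms(2,3) x] z_fun_eq_z_param[OF assms(2,3) y] by simp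
qed

end
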